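(* Let $p,q\geq1$ be integers and let $(\vartheta(s),\alpha(s))$ be a trajectory of the differential system $$\dot\vartheta=3\sin\vartheta\cos\vartheta\sin(\alpha-\vartheta),\qquad \dot\alpha=q\cos\alpha\cos\vartheta-p\sin\alpha\sin\vartheta.$$ Suppose that for some $s_0$ one has $0<\vartheta(s_0)<\pi/2$ and $\vartheta(s_0)-\pi/2\leq\alpha(s_0)\leq\vartheta(s_0)+\pi/2$, i.e. the trajectory is in $R_1=\{(\vartheta,\alpha):0\leq\vartheta\leq\pi/2,\ \vartheta-\pi/2\leq\alpha\leq\vartheta+\pi/2\}$. Then the trajectory remains in $R_1$ for all $s\geq s_0$. *)

theory Defs
  imports Complex_Main
begin

definition R1 :: "(real \<times> real) set" where
  "R1 = {(th, a). 0 \<le> th \<and> th \<le> pi/2 \<and> th - pi/2 \<le> a \<and> a \<le> th + pi/2}"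

end

theory Submission
  imports Defs "HOL-Analysis.Analysis"
begin

text \<open>
  Write \<open>\<beta> = \<alpha> - \<vartheta>\<close>. Up to periodicity, \<open>R1\<close> is cut out by \<open>sin \<vartheta> \<ge> 0\<close>,
  \<open>cos \<vartheta> \<ge> 0\<close> and \<open>cos \<beta> \<ge> 0\<close>, and along the flow each of these functions \<open>h\<close>
  satisfies \<open>h' \<ge> -K \<bar>h\<bar>\<close>. For \<open>sin \<vartheta>\<close> and \<open>cos \<vartheta>\<close> the derivative is \<open>h\<close> times a
  bounded factor; once \<open>\<vartheta>\<close> is known to stay in the first quadrant, the derivative of
  \<open>cos \<beta>\<close> is \<open>-sin \<beta> (q cos\<^sup>2\<vartheta> - p sin\<^sup>2\<vartheta>) cos \<beta> + (p + q + 3) sin \<vartheta> cos \<vartheta> sin\<^sup>2\<beta>\<close>,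
  whose second summand is nonnegative. A Gronwall-type argument shows that such an \<open>h\<close>
  cannot become negative, and by continuity the angles cannot jump to another interval
  on which these signs hold again.
\<close>

lemma nonneg_if_deriv_ge_neg_abs:
  fixes h h' :: "real \<Rightarrow> real"
  assumes deriv: "\<And>u. a \<le> u \<Longrightarrow> u \<le> b \<Longrightarrow> (h has_real_derivative h' u) (at u)"
    and bound: "\<And>u. a \<le> u \<Longrightarrow> u \<le> b \<Longrightarrow> h' u \<ge> - K * \<bar>h u\<bar>"
    and "h a \<ge> 0" and "a \<le> b"
  shows "h b \<ge> 0"
proof (rule ccontr)
  assume "\<not> h b \<ge> 0"
  have cont: "continuous_on {a..b} h"
    using deriv by (intro has_real_derivative_imp_continuous_on) auto
  define S where "S = {u \<in> {a..b}. 0 \<le> h u}"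
  define t where "t = Sup S"
  have "closed S"
    unfolding S_def by (intro continuous_on_closed_Collect_le cont continuous_on_const) auto
  moreover have "a \<in> S" "bdd_above S"
    using \<open>h a \<ge> 0\<close> \<open>a \<le> b\<close> unfolding S_def by auto
  ultimately have "t \<in> S"
    unfolding t_def by (intro closed_contains_Sup) auto
  then have t: "a \<le> t" "t \<le> b" "h t \<ge> 0"
    unfolding S_def by auto
  have neg_after_t: "h u < 0" if "t < u" "u \<le> b" for u
    using that t cSup_upper[OF _ \<open>bdd_above S\<close>, of u] unfolding S_def t_def by force
  \<comment> \<open>On \<open>(t, b]\<close> the bound reads \<open>h' \<ge> K h\<close>, so \<open>h e\<^sup>-\<^sup>K\<^sup>u\<close> is nondecreasing there.\<close>
  define F where "F u = h u * exp (- K * u)" for u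
  have "F t \<le> F b"
  proof (rule DERIV_nonneg_imp_increasing_open[of t b F])
    show "continuous_on {t..b} F"
      unfolding F_def using t
      by (intro continuous_intros continuous_on_subset[OF cont]) auto
    fix u assume u: "t < u" "u < b"
    have "(F has_real_derivative (h' u - K * h u) * exp (- K * u)) (at u)"
      unfolding F_def using u t
      by (auto intro!: derivative_eq_intros deriv simp: algebra_simps)
    moreover have "h' u - K * h u \<ge> 0"
      using bound[of u] neg_after_t[of u] u t by auto
    ultimately show "\<exists>y. DERIV F u :> y \<and> 0 \<le> y"
      by auto
  qed (use t in auto)
  moreover have "F t \<ge> 0" "F b < 0"
    using t \<open>\<not> h b \<ge> 0\<close> unfolding F_def by (auto simp: mult_neg_pos)
  ultimately show False by linarith
qed

lemma continuous_le_if_avoids_interval: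
  fixes f :: "real \<Rightarrow> real"
  assumes "continuous_on {a..b} f" and "a \<le> b" and "f a \<le> c" and "c < d"
    and avoid: "\<And>u. a \<le> u \<Longrightarrow> u \<le> b \<Longrightarrow> f u \<notin> {c<..<d}"
  shows "f b \<le> c"
proof (rule ccontr)
  assume "\<not> f b \<le> c"
  then obtain u where "a \<le> u" "u \<le> b" "f u = min (f b) ((c + d) / 2)"
    using IVT'[of f a "min (f b) ((c + d) / 2)" b] assms by auto
  then show False
    using avoid[of u] \<open>\<not> f b \<le> c\<close> \<open>c < d\<close> by (auto simp: min_def split: if_splits)
qed

lemma continuous_ge_if_avoids_interval:
  fixes f :: "real \<Rightarrow> real"
  assumes "continuous_on {a..b} f" and "a \<le> b" and "f a \<ge> d" and "c < d"
    and avoid: "\<And>u. a \<le> u \<Longrightarrow> u \<le> b \<Longrightarrow> f u \<notin> {c<..<d}"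
  shows "f b \<ge> d"
proof -
  have "- f b \<le> - d"
  proof (rule continuous_le_if_avoids_interval[where f = "\<lambda>u. - f u" and d = "- c"])
    show "continuous_on {a..b} (\<lambda>u. - f u)"
      using assms(1) by (rule continuous_on_minus)
  qed (use assms in auto)
  then show ?thesis by simp
qed

lemma neg_abs_le_mult:
  fixes x y :: real
  assumes "\<bar>y\<bar> \<le> 1"
  shows "- \<bar>x\<bar> \<le> x * y"
proof -
  have "\<bar>x * y\<bar> \<le> \<bar>x\<bar>"
    using assms by (simp add: abs_mult mult_left_le)
  then show ?thesis by linarith
qed

lemma sin_flow_ge:
  fixes t b :: real
  shows "cos t * (3 * sin t * cos t * sin b) \<ge> - 3 * \<bar>sin t\<bar>"
proof -
  have "\<bar>(cos t)\<^sup>2 * sin b\<bar> \<le> 1"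
    by (simp add: abs_mult abs_square_le_1 mult_le_one)
  then have "- \<bar>3 * sin t\<bar> \<le> 3 * sin t * ((cos t)\<^sup>2 * sin b)"
    by (rule neg_abs_le_mult)
  then show ?thesis
    by (simp add: power2_eq_square abs_mult mult_ac)
qed

lemma cos_flow_ge:
  fixes t b :: real
  shows "- sin t * (3 * sin t * cos t * sin b) \<ge> - 3 * \<bar>cos t\<bar>"
proof -
  have "\<bar>- (sin t)\<^sup>2 * sin b\<bar> \<le> 1"
    by (simp add: abs_mult abs_square_le_1 mult_le_one)
  then have "- \<bar>3 * cos t\<bar> \<le> 3 * cos t * (- (sin t)\<^sup>2 * sin b)"
    by (rule neg_abs_le_mult)
  then show ?thesis
    by (simp add: power2_eq_square abs_mult mult_ac)
qed

lemma cos_difference_flow_ge: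
  fixes t a p q :: real
  assumes "p \<ge> 0" and "q \<ge> 0" and "sin t \<ge> 0" and "cos t \<ge> 0"
  shows "- sin (a - t) * ((q * cos a * cos t - p * sin a * sin t) - 3 * sin t * cos t * sin (a - t))
    \<ge> - (p + q) * \<bar>cos (a - t)\<bar>"
proof -
  define b where "b = a - t"
  have a: "a = t + b"
    unfolding b_def by simp
  define c where "c = - sin b * (q * (cos t)\<^sup>2 - p * (sin t)\<^sup>2)"
  have split: "- sin b * ((q * cos a * cos t - p * sin a * sin t) - 3 * sin t * cos t * sin b)
      = c * cos b + (p + q + 3) * (sin t * cos t) * (sin b)\<^sup>2"
    unfolding a c_def by (simp add: cos_add sin_add algebra_simps power2_eq_square)
  have "\<bar>q * (cos t)\<^sup>2 - p * (sin t)\<^sup>2\<bar> \<le> q * (cos t)\<^sup>2 + p * (sin t)\<^sup>2"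
    using assms by (auto simp: abs_le_iff)
  also have "\<dots> \<le> q + p"
    using assms by (intro add_mono mult_left_le) (simp_all add: abs_square_le_1)
  finally have "\<bar>sin b\<bar> * \<bar>q * (cos t)\<^sup>2 - p * (sin t)\<^sup>2\<bar> \<le> 1 * (p + q)"
    by (intro mult_mono) simp_all
  then have "\<bar>c * cos b\<bar> \<le> (p + q) * \<bar>cos b\<bar>"
    unfolding c_def abs_mult abs_minus by (intro mult_right_mono) simp_all
  then have "c * cos b \<ge> - (p + q) * \<bar>cos b\<bar>"
    using abs_ge_minus_self[of "c * cos b"] by linarith
  moreover have "(p + q + 3) * (sin t * cos t) * (sin b)\<^sup>2 \<ge> 0"
    using assms by simp
  ultimately show ?thesis
    using split unfolding b_def by linarith
qed

locale trajectory =
  fixes p q :: real and theta alpha :: "real \<Rightarrow> real"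
  assumes p_nonneg: "p \<ge> 0" and q_nonneg: "q \<ge> 0"
    and theta_deriv: "\<And>s. (theta has_real_derivative
              (3 * sin (theta s) * cos (theta s) * sin (alpha s - theta s))) (at s)"
    and alpha_deriv: "\<And>s. (alpha has_real_derivative
              (q * cos (alpha s) * cos (theta s) - p * sin (alpha s) * sin (theta s))) (at s)"
begin

lemma continuous_on_theta: "continuous_on A theta"
  using theta_deriv by (rule has_real_derivative_imp_continuous_on)

lemma continuous_on_alpha: "continuous_on A alpha"
  using alpha_deriv by (rule has_real_derivative_imp_continuous_on)

lemma continuous_on_alpha_minus_theta: "continuous_on A (\<lambda>s. alpha s - theta s)"
  by (intro continuous_on_diff continuous_on_alpha continuous_on_theta)

lemma sin_theta_nonneg:
  assumes "sin (theta s0) \<ge> 0" and "s0 \<le> s"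
  shows "sin (theta s) \<ge> 0"
proof (rule nonneg_if_deriv_ge_neg_abs[where h = "\<lambda>u. sin (theta u)" and K = 3])
  fix u
  show "((\<lambda>u. sin (theta u)) has_real_derivative
      cos (theta u) * (3 * sin (theta u) * cos (theta u) * sin (alpha u - theta u))) (at u)"
    by (rule DERIV_fun_sin[OF theta_deriv])
  show "cos (theta u) * (3 * sin (theta u) * cos (theta u) * sin (alpha u - theta u))
      \<ge> - 3 * \<bar>sin (theta u)\<bar>"
    by (rule sin_flow_ge)
qed (use assms in auto)

lemma cos_theta_nonneg:
  assumes "cos (theta s0) \<ge> 0" and "s0 \<le> s"
  shows "cos (theta s) \<ge> 0"
proof (rule nonneg_if_deriv_ge_neg_abs[where h = "\<lambda>u. cos (theta u)" and K = 3])
  fix u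
  show "((\<lambda>u. cos (theta u)) has_real_derivative
      - sin (theta u) * (3 * sin (theta u) * cos (theta u) * sin (alpha u - theta u))) (at u)"
    by (rule DERIV_fun_cos[OF theta_deriv])
  show "- sin (theta u) * (3 * sin (theta u) * cos (theta u) * sin (alpha u - theta u))
      \<ge> - 3 * \<bar>cos (theta u)\<bar>"
    by (rule cos_flow_ge)
qed (use assms in auto)

lemma theta_bounds:
  assumes "0 \<le> theta s0" and "theta s0 \<le> pi/2" and "s0 \<le> s"
  shows "0 \<le> theta s" and "theta s \<le> pi/2"
proof -
  have "sin (theta s0) \<ge> 0" "cos (theta s0) \<ge> 0"
    using assms by (auto intro: sin_ge_zero cos_ge_zero)
  then have sin_nonneg: "sin (theta u) \<ge> 0" and cos_nonneg: "cos (theta u) \<ge> 0"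
    if "s0 \<le> u" for u
    using that by (auto intro: sin_theta_nonneg cos_theta_nonneg)
  show "0 \<le> theta s"
  proof (rule continuous_ge_if_avoids_interval
      [where f = theta and a = s0 and b = s and c = "- pi/2"])
    fix u assume "s0 \<le> u"
    then show "theta u \<notin> {- pi/2<..<0}"
      using sin_nonneg[of u] sin_less_zero[of "theta u"] by auto
  qed (use assms continuous_on_theta in auto)
  show "theta s \<le> pi/2"
  proof (rule continuous_le_if_avoids_interval
      [where f = theta and a = s0 and b = s and d = "3 * pi/2"])
    fix u assume "s0 \<le> u"
    then show "theta u \<notin> {pi/2<..<3 * pi/2}"
      using cos_nonneg[of u] cos_lt_zero_pi[of "theta u"] by auto
  qed (use assms continuous_on_theta in auto)
qed

lemma cos_alpha_minus_theta_nonneg: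
  assumes "0 \<le> theta s0" and "theta s0 \<le> pi/2" and "cos (alpha s0 - theta s0) \<ge> 0"
    and "s0 \<le> s"
  shows "cos (alpha s - theta s) \<ge> 0"
proof (rule nonneg_if_deriv_ge_neg_abs
    [where h = "\<lambda>u. cos (alpha u - theta u)" and K = "p + q"])
  fix u
  show "((\<lambda>u. cos (alpha u - theta u)) has_real_derivative
      - sin (alpha u - theta u) *
        ((q * cos (alpha u) * cos (theta u) - p * sin (alpha u) * sin (theta u))
          - 3 * sin (theta u) * cos (theta u) * sin (alpha u - theta u))) (at u)"
    by (auto intro!: derivative_eq_intros theta_deriv alpha_deriv)
  assume "s0 \<le> u"
  then have "0 \<le> theta u" "theta u \<le> pi/2"
    using assms theta_bounds by blast+
  then show "- sin (alpha u - theta u) *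
        ((q * cos (alpha u) * cos (theta u) - p * sin (alpha u) * sin (theta u))
          - 3 * sin (theta u) * cos (theta u) * sin (alpha u - theta u))
      \<ge> - (p + q) * \<bar>cos (alpha u - theta u)\<bar>"
    by (intro cos_difference_flow_ge p_nonneg q_nonneg sin_ge_zero cos_ge_zero) auto
qed (use assms in auto)

lemma alpha_minus_theta_bounds:
  assumes "0 \<le> theta s0" and "theta s0 \<le> pi/2" and "\<bar>alpha s0 - theta s0\<bar> \<le> pi/2"
    and "s0 \<le> s"
  shows "\<bar>alpha s - theta s\<bar> \<le> pi/2"
proof -
  have initial: "- pi/2 \<le> alpha s0 - theta s0" "alpha s0 - theta s0 \<le> pi/2"
    using assms(3) unfolding abs_le_iff by linarith+
  then have "cos (alpha s0 - theta s0) \<ge> 0"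
    by (intro cos_ge_zero) auto
  then have cos_nonneg: "cos (alpha u - theta u) \<ge> 0" if "s0 \<le> u" for u
    using cos_alpha_minus_theta_nonneg[OF assms(1,2)] that by blast
  have "alpha s - theta s \<le> pi/2"
  proof (rule continuous_le_if_avoids_interval
      [where f = "\<lambda>u. alpha u - theta u" and a = s0 and b = s and d = "3 * pi/2"])
    fix u assume "s0 \<le> u"
    then show "alpha u - theta u \<notin> {pi/2<..<3 * pi/2}"
      using cos_nonneg[of u] cos_lt_zero_pi[of "alpha u - theta u"] by auto
  qed (use initial assms(4) continuous_on_alpha_minus_theta in auto)
  moreover have "- pi/2 \<le> alpha s - theta s"
  proof (rule continuous_ge_if_avoids_interval
      [where f = "\<lambda>u. alpha u - theta u" and a = s0 and b = s and c = "- 3 * pi/2"])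
    fix u assume "s0 \<le> u"
    then show "alpha u - theta u \<notin> {- 3 * pi/2<..<- pi/2}"
      using cos_nonneg[of u] cos_lt_zero_pi[of "theta u - alpha u"]
      by (auto simp: cos_diff mult.commute)
  qed (use initial assms(4) continuous_on_alpha_minus_theta in auto)
  ultimately show ?thesis
    unfolding abs_le_iff by linarith
qed

lemma R1_forward_invariant:
  assumes "(theta s0, alpha s0) \<in> R1" and "s0 \<le> s"
  shows "(theta s, alpha s) \<in> R1"
proof -
  have "0 \<le> theta s0" "theta s0 \<le> pi/2" "\<bar>alpha s0 - theta s0\<bar> \<le> pi/2"
    using assms(1) unfolding R1_def abs_le_iff by auto
  then have "0 \<le> theta s" "theta s \<le> pi/2" "\<bar>alpha s - theta s\<bar> \<le> pi/2"
    using theta_bounds alpha_minus_theta_bounds assms(2) by blast+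
  then show ?thesis
    unfolding R1_def abs_le_iff by auto
qed

end

theorem lemma4p7:
  fixes p q :: nat and theta alpha :: "real \<Rightarrow> real" and s0 :: real
  assumes "p \<ge> 1" and "q \<ge> 1"
    and "\<And>s. (theta has_real_derivative
              (3 * sin (theta s) * cos (theta s) * sin (alpha s - theta s))) (at s)"
    and "\<And>s. (alpha has_real_derivative
              (real q * cos (alpha s) * cos (theta s) - real p * sin (alpha s) * sin (theta s))) (at s)"
    and "0 < theta s0" and "theta s0 < pi/2"
    and "theta s0 - pi/2 \<le> alpha s0" and "alpha s0 \<le> theta s0 + pi/2"
  shows "\<forall>s\<ge>s0. (theta s, alpha s) \<in> R1"
proof -
  \<comment> \<open>The argument only needs \<open>p, q \<ge> 0\<close> and the closed region.\<close>
  interpret trajectory "real p" "real q" theta alpha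
    using assms(3,4) by unfold_locales auto
  have "(theta s0, alpha s0) \<in> R1"
    using assms(5-8) unfolding R1_def by auto
  then show ?thesis
    using R1_forward_invariant by blast
qed

end
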